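(* Consider the algorithm in the context with $S=I_n$ and one-shot noise: for each $i$, $\eta_i(0)\sim\mathrm{Lap}(c_i)$ with $c_i>0$, and $\eta_i(k)=0$ for all $k\ge1$, the $\eta_i(0)$ being independent. Then for each $i$ the algorithm preserves $\epsilon_i$-differential privacy of agent $i$'s initial state with $\epsilon_i=\delta/c_i$ (i.e., for any two initial states differing only in component $i$ by at most $\delta$ and any Borel $\mathcal{O}\subseteq(\mathbb{R}^n)^{\mathbb{N}}$, $\mathbb{P}\{X_{\theta_0^{(1)}}(\boldsymbol\eta)\in\mathcal{O}\}\le e^{\epsilon_i}\mathbb{P}\{X_{\theta_0^{(2)}}(\boldsymbol\eta)\in\mathcal{O}\}$), and $\theta(k)\to\theta_\infty\mathbf{1}_n$ with $\theta_\infty=\mathrm{Ave}(\theta_0)+\frac1n\sum_i\eta_i(0)$, whose variance is $\frac{2}{n^2}\sum_{i=1}^nc_i^2=\frac{2\delta^2}{n^2}\sum_{i=1}^n\frac{1}{\epsilon_i^2}$.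
   Context: $n$ agents communicate over an undirected connected weighted graph with Laplacian $L$ and maximal weighted degree $d_{\max}$; $\mathrm{Ave}(x)=\frac1n\mathbf{1}_n^Tx$. The algorithm is $\theta(k+1)=\theta(k)-hLx(k)+S\eta(k)$, $x(k)=\theta(k)+\eta(k)$, $\theta(0)=\theta_0$, with $0<h<1/d_{\max}$. $X_{\theta_0}$ maps the noise sequence to the message sequence $\{x(k)\}_{k\ge0}$. $\mathrm{Lap}(b)$ is the zero-mean Laplace distribution with density $\frac{1}{2b}e^{-|x|/b}$. *)

theory Defs
  imports "HOL-Probability.Probability"
begin

definition weighted_graph :: "real^'n^'n \<Rightarrow> bool" where
  "weighted_graph W \<longleftrightarrow> (\<forall>i j. W$i$j = W$j$i) \<and> (\<forall>i j. 0 \<le> W$i$j) \<and> (\<forall>i. W$i$i = 0)"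

definition graph_connected :: "real^'n^'n \<Rightarrow> bool" where
  "graph_connected W \<longleftrightarrow> (\<forall>i j. (\<lambda>a b. W$a$b > 0)\<^sup>*\<^sup>* i j)"

definition wdegree :: "real^'n^'n \<Rightarrow> 'n \<Rightarrow> real" where
  "wdegree W i = (\<Sum>j\<in>UNIV. W$i$j)"

definition dmax :: "real^'n^'n \<Rightarrow> real" where
  "dmax W = Max (range (wdegree W))"

definition laplacian :: "real^'n^'n \<Rightarrow> real^'n^'n" where
  "laplacian W = (\<chi> i j. (if i = j then wdegree W i else 0) - W$i$j)"

definition Ave :: "real^'n \<Rightarrow> real" where
  "Ave x = (\<Sum>i\<in>UNIV. x$i) / real CARD('n)"

definition ones :: "real^'n" where
  "ones = (\<chi> i. 1)"

primrec theta_seq :: "real^'n^'n \<Rightarrow> real \<Rightarrow> real^'n^'n \<Rightarrow> real^'n \<Rightarrow> (nat \<Rightarrow> real^'n) \<Rightarrow> nat \<Rightarrow> real^'n" where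
  "theta_seq L h S \<theta>0 \<eta> 0 = \<theta>0"
| "theta_seq L h S \<theta>0 \<eta> (Suc k) =
     theta_seq L h S \<theta>0 \<eta> k - h *\<^sub>R (L *v (theta_seq L h S \<theta>0 \<eta> k + \<eta> k)) + S *v \<eta> k"

definition msg_seq :: "real^'n^'n \<Rightarrow> real \<Rightarrow> real^'n^'n \<Rightarrow> real^'n \<Rightarrow> (nat \<Rightarrow> real^'n) \<Rightarrow> nat \<Rightarrow> real^'n" where
  "msg_seq L h S \<theta>0 \<eta> = (\<lambda>k. theta_seq L h S \<theta>0 \<eta> k + \<eta> k)"

definition lap_density :: "real \<Rightarrow> real \<Rightarrow> real" where
  "lap_density b x = exp (- \<bar>x\<bar> / b) / (2 * b)"

definition agent_dp :: "'a measure \<Rightarrow> ('a \<Rightarrow> nat \<Rightarrow> real^'n)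
     \<Rightarrow> (real^'n \<Rightarrow> (nat \<Rightarrow> real^'n) \<Rightarrow> nat \<Rightarrow> real^'n) \<Rightarrow> real \<Rightarrow> 'n \<Rightarrow> real \<Rightarrow> bool" where
  "agent_dp M \<eta> X \<delta> i \<epsilon> \<longleftrightarrow>
     (\<forall>\<theta>1 \<theta>2 Obs. (\<forall>j. j \<noteq> i \<longrightarrow> \<theta>1$j = \<theta>2$j) \<and> \<bar>\<theta>1$i - \<theta>2$i\<bar> \<le> \<delta> \<and> Obs \<in> sets borel \<longrightarrow>
        measure M {\<omega>\<in>space M. X \<theta>1 (\<eta> \<omega>) \<in> Obs}
          \<le> exp \<epsilon> * measure M {\<omega>\<in>space M. X \<theta>2 (\<eta> \<omega>) \<in> Obs})"

end

theory Submission
  imports Defs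
begin

text \<open>With one-shot noise the algorithm is the noise-free consensus iteration
  \<open>v \<mapsto> v - h L v\<close> started at \<open>\<theta>\<^sub>0 + \<eta>(0)\<close>. This map fixes the constant vectors, preserves the
  sum of the entries, and strictly contracts the zero-sum subspace: \<open>L\<close> is positive semidefinite
  with kernel the constants on a connected graph, and \<open>h * dmax W < 1\<close> controls \<open>\<parallel>L v\<parallel>\<^sup>2\<close>.
  Hence \<open>\<theta>(k)\<close> converges to the average of \<open>\<theta>\<^sub>0 + \<eta>(0)\<close>. The messages are a deterministic
  function of \<open>\<theta>\<^sub>0 + \<eta>(0)\<close>, so changing \<open>\<theta>\<^sub>0\<close> in coordinate \<open>i\<close> by \<open>d\<close> amounts to translating the
  independent Laplace noise \<open>\<eta>\<^sub>i(0)\<close> by \<open>d\<close>, which multiplies its density by at most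
  \<open>exp (\<bar>d\<bar> / c\<^sub>i)\<close>. The variance of the limit follows from independence and \<open>Var Lap(c) = 2c\<^sup>2\<close>.\<close>

section \<open>Graph Laplacian\<close>

lemma laplacian_mult_vec_nth:
  fixes W :: "real^'n^'n"
  shows "(laplacian W *v y) $ i = (\<Sum>j\<in>UNIV. W$i$j * (y$i - y$j))"
proof -
  have "(laplacian W *v y) $ i = (\<Sum>j\<in>UNIV. (if i = j then wdegree W i * y$j else 0) - W$i$j * y$j)"
    by (auto simp: matrix_vector_mult_def laplacian_def left_diff_distrib intro!: sum.cong)
  also have "\<dots> = wdegree W i * y$i - (\<Sum>j\<in>UNIV. W$i$j * y$j)"
    by (simp add: sum_subtractf)
  also have "\<dots> = (\<Sum>j\<in>UNIV. W$i$j * (y$i - y$j))"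
    by (simp add: wdegree_def sum_distrib_right right_diff_distrib sum_subtractf)
  finally show ?thesis .
qed

lemma weighted_graph_sum_swap:
  fixes W :: "real^'n^'n"
  assumes "weighted_graph W"
  shows "(\<Sum>i\<in>UNIV. \<Sum>j\<in>UNIV. W$i$j * f i j) = (\<Sum>i\<in>UNIV. \<Sum>j\<in>UNIV. W$i$j * f j i)"
  using assms by (subst sum.swap) (simp add: weighted_graph_def)

lemma sum_laplacian_mult_vec:
  fixes W :: "real^'n^'n"
  assumes "weighted_graph W"
  shows "(\<Sum>i\<in>UNIV. (laplacian W *v y) $ i) = 0"
proof -
  let ?S = "\<Sum>i\<in>UNIV. \<Sum>j\<in>UNIV. W$i$j * (y$i - y$j)"
  have "?S = (\<Sum>i\<in>UNIV. \<Sum>j\<in>UNIV. W$i$j * (y$j - y$i))"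
    by (rule weighted_graph_sum_swap[OF assms])
  also have "\<dots> = - ?S"
    by (simp add: sum_negf[symmetric] algebra_simps)
  finally show ?thesis
    by (simp add: laplacian_mult_vec_nth)
qed

lemma inner_laplacian_eq:
  fixes W :: "real^'n^'n"
  assumes "weighted_graph W"
  shows "y \<bullet> (laplacian W *v y) = (\<Sum>i\<in>UNIV. \<Sum>j\<in>UNIV. W$i$j * (y$i - y$j)^2) / 2"
proof -
  let ?A = "\<Sum>i\<in>UNIV. \<Sum>j\<in>UNIV. W$i$j * (y$i * (y$i - y$j))"
  have "y \<bullet> (laplacian W *v y) = ?A"
    by (simp add: inner_vec_def laplacian_mult_vec_nth sum_distrib_left algebra_simps)
  moreover have swapped: "?A = (\<Sum>i\<in>UNIV. \<Sum>j\<in>UNIV. W$i$j * (y$j * (y$j - y$i)))"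
    by (rule weighted_graph_sum_swap[OF assms])
  have "?A + ?A = (\<Sum>i\<in>UNIV. \<Sum>j\<in>UNIV. W$i$j * (y$i - y$j)^2)"
    by (subst (2) swapped) (simp add: sum.distrib[symmetric] power2_eq_square algebra_simps)
  ultimately show ?thesis
    by simp
qed

lemma inner_laplacian_nonneg:
  fixes W :: "real^'n^'n"
  assumes "weighted_graph W"
  shows "0 \<le> y \<bullet> (laplacian W *v y)"
  using assms unfolding inner_laplacian_eq[OF assms]
  by (auto intro!: sum_nonneg simp: weighted_graph_def)

lemma wdegree_le_dmax: "wdegree W i \<le> dmax W"
  unfolding dmax_def by (rule Max_ge) auto

lemma inner_laplacian_self_le:
  fixes W :: "real^'n^'n"
  assumes g: "weighted_graph W"
  shows "(laplacian W *v y) \<bullet> (laplacian W *v y) \<le> 2 * dmax W * (y \<bullet> (laplacian W *v y))"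
proof -
  have W_nonneg: "0 \<le> W$i$j" for i j
    using g by (simp add: weighted_graph_def)
  define E where "E i = (\<Sum>j\<in>UNIV. W$i$j * (y$i - y$j)^2)" for i
  have row_le: "((laplacian W *v y) $ i)^2 \<le> dmax W * E i" for i
  proof -
    have "((laplacian W *v y) $ i)^2 = (\<Sum>j\<in>UNIV. sqrt (W$i$j) * (sqrt (W$i$j) * (y$i - y$j)))^2"
      using W_nonneg by (simp add: laplacian_mult_vec_nth mult.assoc[symmetric])
    also have "\<dots> \<le> (\<Sum>j\<in>UNIV. (sqrt (W$i$j))^2) * (\<Sum>j\<in>UNIV. (sqrt (W$i$j) * (y$i - y$j))^2)"
      by (rule Cauchy_Schwarz_ineq_sum)
    also have "\<dots> = wdegree W i * E i"
      using W_nonneg by (simp add: E_def wdegree_def power_mult_distrib)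
    also have "\<dots> \<le> dmax W * E i"
      using W_nonneg by (intro mult_right_mono wdegree_le_dmax) (auto simp: E_def intro: sum_nonneg)
    finally show ?thesis .
  qed
  have "(laplacian W *v y) \<bullet> (laplacian W *v y) = (\<Sum>i\<in>UNIV. ((laplacian W *v y) $ i)^2)"
    by (simp add: inner_vec_def power2_eq_square)
  also have "\<dots> \<le> (\<Sum>i\<in>UNIV. dmax W * E i)"
    by (intro sum_mono row_le)
  also have "\<dots> = 2 * dmax W * (y \<bullet> (laplacian W *v y))"
    by (simp add: inner_laplacian_eq[OF g] E_def sum_distrib_left[symmetric])
  finally show ?thesis .
qed

lemma inner_laplacian_eq_0_imp_constant:
  fixes W :: "real^'n^'n"
  assumes g: "weighted_graph W" and conn: "graph_connected W"
    and q: "y \<bullet> (laplacian W *v y) = 0"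
  shows "y$i = y$j"
proof -
  have W_nonneg: "0 \<le> W$a$b" for a b
    using g by (simp add: weighted_graph_def)
  have "(\<Sum>a\<in>UNIV. \<Sum>b\<in>UNIV. W$a$b * (y$a - y$b)^2) = 0"
    using q by (simp add: inner_laplacian_eq[OF g])
  then have "W$a$b = 0 \<or> y$a = y$b" for a b
    using W_nonneg by (simp add: sum_nonneg_eq_0_iff sum_nonneg)
  then have edge: "W$a$b > 0 \<Longrightarrow> y$a = y$b" for a b
    by (metis less_irrefl)
  have "(\<lambda>a b. W$a$b > 0)\<^sup>*\<^sup>* i j"
    using conn by (simp add: graph_connected_def)
  then show ?thesis
    by (induction rule: rtranclp_induct) (auto dest: edge)
qed

section \<open>Consensus iteration\<close>

lemma linear_uniform_contraction_on_subspace: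
  fixes f :: "'a::euclidean_space \<Rightarrow> 'b::real_normed_vector"
  assumes f: "linear f" and S: "subspace S"
    and strict: "\<And>y. y \<in> S \<Longrightarrow> y \<noteq> 0 \<Longrightarrow> norm (f y) < norm y"
  shows "\<exists>\<rho>. 0 \<le> \<rho> \<and> \<rho> < 1 \<and> (\<forall>y\<in>S. norm (f y) \<le> \<rho> * norm y)"
proof (cases "S \<inter> sphere 0 1 = {}")
  case True
  have trivial: "y = 0" if "y \<in> S" for y
  proof (rule ccontr)
    assume "y \<noteq> 0"
    then have "(1 / norm y) *\<^sub>R y \<in> S \<inter> sphere 0 1"
      using S that by (simp add: subspace_scale)
    with True show False
      by blast
  qed
  then show ?thesis
    using linear_0[OF f] by (intro exI[of _ 0]) (auto dest: trivial)
next
  case False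
  have "compact (S \<inter> sphere 0 1)"
    using closed_subspace[OF S] by (intro closed_Int_compact compact_sphere)
  moreover have "continuous_on (S \<inter> sphere 0 1) (\<lambda>y. norm (f y))"
    using f by (intro continuous_intros linear_continuous_on) (simp add: linear_conv_bounded_linear)
  ultimately obtain y0 where "y0 \<in> S \<inter> sphere 0 1"
    and "\<forall>y\<in>S \<inter> sphere 0 1. norm (f y) \<le> norm (f y0)"
    using continuous_attains_sup[OF _ False] by blast
  then have y0: "y0 \<in> S" "norm y0 = 1"
    and max: "\<And>y. y \<in> S \<Longrightarrow> norm y = 1 \<Longrightarrow> norm (f y) \<le> norm (f y0)"
    by auto
  have "y0 \<noteq> 0"
    using y0 by auto
  then have "norm (f y0) < 1"
    using strict y0 by fastforce
  moreover have "norm (f y) \<le> norm (f y0) * norm y" if "y \<in> S" for y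
  proof (cases "y = 0")
    case True
    then show ?thesis
      by (simp add: linear_0[OF f])
  next
    case False
    then have "norm (f ((1 / norm y) *\<^sub>R y)) \<le> norm (f y0)"
      using S that by (intro max) (simp_all add: subspace_scale)
    then have "norm (f y) / norm y \<le> norm (f y0)"
      by (simp add: linear_scale[OF f])
    then show ?thesis
      using False by (simp add: divide_le_eq mult.commute)
  qed
  ultimately show ?thesis
    by (intro exI[of _ "norm (f y0)"]) auto
qed

lemma linear_iterates_tendsto_zero_on_subspace:
  fixes f :: "'a::euclidean_space \<Rightarrow> 'a"
  assumes f: "linear f" and S: "subspace S" and invariant: "\<And>y. y \<in> S \<Longrightarrow> f y \<in> S"
    and strict: "\<And>y. y \<in> S \<Longrightarrow> y \<noteq> 0 \<Longrightarrow> norm (f y) < norm y" and y: "y \<in> S"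
  shows "(\<lambda>k. (f ^^ k) y) \<longlonglongrightarrow> 0"
proof -
  obtain \<rho> where \<rho>: "0 \<le> \<rho>" "\<rho> < 1" and contr: "\<forall>y\<in>S. norm (f y) \<le> \<rho> * norm y"
    using linear_uniform_contraction_on_subspace[OF f S strict] by blast
  have iterate_in_S: "(f ^^ k) y \<in> S" for k
    by (induction k) (simp_all add: y invariant)
  have bound: "norm ((f ^^ k) y) \<le> \<rho> ^ k * norm y" for k
  proof (induction k)
    case (Suc k)
    have "norm ((f ^^ Suc k) y) \<le> \<rho> * norm ((f ^^ k) y)"
      using contr iterate_in_S by simp
    also have "\<dots> \<le> \<rho> * (\<rho> ^ k * norm y)"
      using Suc \<rho> by (intro mult_left_mono) auto
    finally show ?case
      by simp
  qed simp
  have geometric: "(\<lambda>k. \<rho> ^ k * norm y) \<longlonglongrightarrow> 0"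
    using \<rho> by (intro tendsto_mult_left_zero LIMSEQ_power_zero) simp
  show ?thesis
    by (rule Lim_null_comparison[OF always_eventually[OF allI[OF bound]] geometric])
qed

definition consensus_step :: "real^'n^'n \<Rightarrow> real \<Rightarrow> real^'n \<Rightarrow> real^'n" where
  "consensus_step L h v = v - h *\<^sub>R (L *v v)"

lemma linear_consensus_step: "linear (consensus_step L h)"
  unfolding consensus_step_def
  by (simp add: linear_iff matrix_vector_right_distrib matrix_vector_mult_scaleR algebra_simps)

lemma consensus_step_constant: "consensus_step (laplacian W) h (a *\<^sub>R ones) = a *\<^sub>R ones"
  by (simp add: consensus_step_def vec_eq_iff laplacian_mult_vec_nth ones_def)

lemma sum_consensus_step:
  fixes W :: "real^'n^'n"
  assumes "weighted_graph W"
  shows "(\<Sum>i\<in>UNIV. consensus_step (laplacian W) h y $ i) = (\<Sum>i\<in>UNIV. y $ i)"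
  using sum_laplacian_mult_vec[OF assms, of y]
  by (simp add: consensus_step_def sum_subtractf sum_distrib_left[symmetric])

lemma norm_consensus_step_less:
  fixes W :: "real^'n^'n"
  assumes g: "weighted_graph W" and conn: "graph_connected W" and h: "0 < h" "h * dmax W < 1"
    and zero_sum: "(\<Sum>i\<in>UNIV. y $ i) = 0" and nonzero: "y \<noteq> 0"
  shows "norm (consensus_step (laplacian W) h y) < norm y"
proof -
  let ?Ly = "laplacian W *v y"
  have "y \<bullet> ?Ly \<noteq> 0"
  proof
    assume "y \<bullet> ?Ly = 0"
    then have const: "y $ i = y $ j" for i j
      by (rule inner_laplacian_eq_0_imp_constant[OF g conn])
    have "real CARD('n) * y $ j = 0" for j
    proof -
      have "(\<Sum>i\<in>UNIV. y $ i) = (\<Sum>i::'n\<in>UNIV. y $ j)"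
        by (rule sum.cong[OF refl const])
      with zero_sum show ?thesis
        by simp
    qed
    then have "y = 0"
      by (simp add: vec_eq_iff)
    with nonzero show False ..
  qed
  then have "0 < y \<bullet> ?Ly"
    using inner_laplacian_nonneg[OF g, of y] by linarith
  then have decrease: "0 < 2 * h * (1 - h * dmax W) * (y \<bullet> ?Ly)"
    using h by simp
  have "(norm (consensus_step (laplacian W) h y))^2 = (norm y)^2 - 2 * h * (y \<bullet> ?Ly) + h^2 * (?Ly \<bullet> ?Ly)"
    unfolding consensus_step_def power2_norm_eq_inner
    by (simp add: inner_diff_left inner_diff_right inner_commute power2_eq_square algebra_simps)
  also have "\<dots> \<le> (norm y)^2 - 2 * h * (1 - h * dmax W) * (y \<bullet> ?Ly)"
    using mult_left_mono[OF inner_laplacian_self_le[OF g, of y], of "h^2"]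
    by (simp add: power2_eq_square algebra_simps)
  finally have "(norm (consensus_step (laplacian W) h y))^2 < (norm y)^2"
    using decrease by linarith
  then show ?thesis
    by (rule power2_less_imp_less) simp
qed

lemma consensus_iterates_tendsto_average:
  fixes W :: "real^'n^'n"
  assumes g: "weighted_graph W" and conn: "graph_connected W" and h: "0 < h" "h * dmax W < 1"
  shows "(\<lambda>k. (consensus_step (laplacian W) h ^^ k) x) \<longlonglongrightarrow> Ave x *\<^sub>R ones"
proof -
  let ?P = "consensus_step (laplacian W) h"
  define Z where "Z = {y::real^'n. (\<Sum>i\<in>UNIV. y $ i) = 0}"
  have "subspace Z"
    unfolding Z_def by (rule linear_subspace_kernel) (simp add: linear_iff sum.distrib sum_distrib_left)
  moreover define y where "y = x - Ave x *\<^sub>R ones"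
  moreover have "y \<in> Z"
    by (simp add: Z_def y_def Ave_def ones_def sum_subtractf)
  ultimately have "(\<lambda>k. (?P ^^ k) y) \<longlonglongrightarrow> 0"
    using sum_consensus_step[OF g] norm_consensus_step_less[OF g conn h]
    by (intro linear_iterates_tendsto_zero_on_subspace[OF linear_consensus_step]) (auto simp: Z_def)
  then have "(\<lambda>k. Ave x *\<^sub>R ones + (?P ^^ k) y) \<longlonglongrightarrow> Ave x *\<^sub>R ones"
    using tendsto_add[OF tendsto_const] by fastforce
  moreover have "(?P ^^ k) x = Ave x *\<^sub>R ones + (?P ^^ k) y" for k
    by (induction k) (simp_all add: y_def linear_add[OF linear_consensus_step] consensus_step_constant)
  ultimately show ?thesis
    by simp
qed

lemma theta_seq_one_shot:
  assumes "\<forall>k\<ge>1. e k = 0"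
  shows "theta_seq L h (mat 1) \<theta>0 e (Suc k) = (consensus_step L h ^^ Suc k) (\<theta>0 + e 0)"
proof (induction k)
  case 0
  then show ?case
    by (simp add: consensus_step_def algebra_simps)
next
  case (Suc k)
  moreover have "e (Suc k) = 0"
    using assms by simp
  ultimately show ?case
    by (simp add: consensus_step_def)
qed

lemma msg_seq_one_shot:
  assumes "\<forall>k\<ge>1. e k = 0"
  shows "msg_seq L h (mat 1) \<theta>0 e = (\<lambda>k. (consensus_step L h ^^ k) (\<theta>0 + e 0))"
proof
  fix k
  show "msg_seq L h (mat 1) \<theta>0 e k = (consensus_step L h ^^ k) (\<theta>0 + e 0)"
  proof (cases k)
    case (Suc m)
    then have "e k = 0"
      using assms by simp
    with Suc show ?thesis
      by (simp only: msg_seq_def theta_seq_one_shot[OF assms]) simp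
  qed (simp add: msg_seq_def)
qed

lemma theta_seq_one_shot_tendsto:
  fixes W :: "real^'n^'n"
  assumes g: "weighted_graph W" and conn: "graph_connected W" and h: "0 < h" "h * dmax W < 1"
    and e: "\<forall>k\<ge>1. e k = 0"
  shows "theta_seq (laplacian W) h (mat 1) \<theta>0 e
           \<longlonglongrightarrow> (Ave \<theta>0 + (\<Sum>i\<in>UNIV. e 0 $ i) / real CARD('n)) *\<^sub>R ones"
proof -
  have average: "Ave (\<theta>0 + e 0) = Ave \<theta>0 + (\<Sum>i\<in>UNIV. e 0 $ i) / real CARD('n)"
    by (simp add: Ave_def sum.distrib add_divide_distrib)
  have "(\<lambda>k. (consensus_step (laplacian W) h ^^ Suc k) (\<theta>0 + e 0)) \<longlonglongrightarrow> Ave (\<theta>0 + e 0) *\<^sub>R ones"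
    by (rule LIMSEQ_Suc[OF consensus_iterates_tendsto_average[OF g conn h]])
  then have "(\<lambda>k. theta_seq (laplacian W) h (mat 1) \<theta>0 e (Suc k)) \<longlonglongrightarrow> Ave (\<theta>0 + e 0) *\<^sub>R ones"
    by (simp only: theta_seq_one_shot[OF e])
  then show ?thesis
    unfolding average by (rule LIMSEQ_imp_Suc)
qed

section \<open>Laplace noise\<close>

lemma lap_density_nonneg: "0 < b \<Longrightarrow> 0 \<le> lap_density b x"
  by (simp add: lap_density_def)

lemma borel_measurable_lap_density [measurable]: "lap_density b \<in> borel_measurable borel"
  unfolding lap_density_def by measurable

text \<open>On the positive half-line the Laplace density is half the exponential density with rate
  \<open>1/b\<close>, i.e.\ the Erlang density of order 0, whose moments are known.\<close>

lemma nn_integral_lap_abs_power: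
  assumes b: "0 < b" and k: "1 \<le> k"
  shows "(\<integral>\<^sup>+x. ennreal (lap_density b x * \<bar>x\<bar>^k) \<partial>lborel) = ennreal (fact k * b^k)"
proof -
  define g where "g x = lap_density b x * \<bar>x\<bar>^k" for x
  have [measurable]: "g \<in> borel_measurable borel"
    unfolding g_def by measurable
  have g_0: "g 0 = 0" and g_even: "g (-x) = g x" for x
    using k by (simp_all add: g_def lap_density_def)
  have half: "(\<integral>\<^sup>+x. ennreal (g x) * indicator {0..} x \<partial>lborel) = ennreal (1/2) * ennreal (fact k * b^k)"
  proof -
    have "(\<integral>\<^sup>+x. ennreal (g x) * indicator {0..} x \<partial>lborel)
        = (\<integral>\<^sup>+x. ennreal ((1/2) * (erlang_density 0 (1/b) x * x^k)) \<partial>lborel)"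
      using b by (intro nn_integral_cong) (auto simp: g_def lap_density_def erlang_density_def
          split: split_indicator intro!: arg_cong[where f=ennreal])
    also have "\<dots> = (\<integral>\<^sup>+x. ennreal (1/2) * ennreal (erlang_density 0 (1/b) x * x^k) \<partial>lborel)"
      by (intro nn_integral_cong ennreal_mult') simp
    also have "\<dots> = ennreal (1/2) * ennreal (fact k * b^k)"
      using b by (simp add: nn_integral_cmult nn_integral_erlang_ith_moment power_one_over)
    finally show ?thesis .
  qed
  have reflect: "(\<integral>\<^sup>+x. ennreal (g x) * indicator {..<0} x \<partial>lborel)
      = (\<integral>\<^sup>+x. ennreal (g x) * indicator {0..} x \<partial>lborel)"
  proof -
    have "(\<integral>\<^sup>+x. ennreal (g x) * indicator {..<0} x \<partial>lborel)
        = (\<integral>\<^sup>+x. ennreal (g (0 + (-1) * x)) * indicator {..<0} (0 + (-1) * x) \<partial>lborel)"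
      by (subst nn_integral_real_affine[where c="-1" and t=0]) auto
    also have "\<dots> = (\<integral>\<^sup>+x. ennreal (g x) * indicator {0..} x \<partial>lborel)"
      using g_0 by (intro nn_integral_cong) (auto simp: g_even split: split_indicator)
    finally show ?thesis .
  qed
  have "(\<integral>\<^sup>+x. ennreal (g x) \<partial>lborel)
      = (\<integral>\<^sup>+x. ennreal (g x) * indicator {0..} x \<partial>lborel) + (\<integral>\<^sup>+x. ennreal (g x) * indicator {..<0} x \<partial>lborel)"
    by (subst nn_integral_add[symmetric]) (auto intro!: nn_integral_cong split: split_indicator)
  also have "\<dots> = (ennreal (1/2) + ennreal (1/2)) * ennreal (fact k * b^k)"
    unfolding reflect half by (rule distrib_right[symmetric])
  also have "ennreal (1/2) + ennreal (1/2) = 1"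
    by (subst ennreal_plus[symmetric]) auto
  finally show ?thesis
    by (simp add: g_def)
qed

lemma integrable_lap_first_moment: "0 < b \<Longrightarrow> integrable lborel (\<lambda>x. lap_density b x * x)"
  using nn_integral_lap_abs_power[of b 1]
  by (intro integrableI_bounded) (simp_all add: abs_mult lap_density_nonneg)

lemma has_bochner_integral_lap_second_moment:
  "0 < b \<Longrightarrow> has_bochner_integral lborel (\<lambda>x. lap_density b x * x^2) (2 * b^2)"
  using nn_integral_lap_abs_power[of b 2]
  by (intro has_bochner_integral_nn_integral) (auto simp: lap_density_nonneg)

lemma integral_lap_first_moment: "(\<integral>x. lap_density b x * x \<partial>lborel) = 0"
proof -
  have "(\<integral>x. lap_density b x * x \<partial>lborel)
      = \<bar>-1\<bar> *\<^sub>R (\<integral>x. lap_density b (0 + (-1) * x) * (0 + (-1) * x) \<partial>lborel)"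
    by (rule lborel_integral_real_affine) simp
  also have "\<dots> = - (\<integral>x. lap_density b x * x \<partial>lborel)"
    by (simp add: lap_density_def)
  finally show ?thesis
    by simp
qed

lemma (in prob_space) lap_distributed_moments:
  assumes b: "0 < b" and X: "distributed M lborel X (\<lambda>x. ennreal (lap_density b x))"
  shows "integrable M X" "expectation X = 0"
    "integrable M (\<lambda>\<omega>. X \<omega>^2)" "expectation (\<lambda>\<omega>. X \<omega>^2) = 2 * b^2"
  using distributed_integrable[OF X, of "\<lambda>x. x"] distributed_integral[OF X, of "\<lambda>x. x"]
    distributed_integrable[OF X, of "\<lambda>x. x^2"] distributed_integral[OF X, of "\<lambda>x. x^2"]
    integrable_lap_first_moment[OF b] integral_lap_first_moment[of b]
    has_bochner_integral_lap_second_moment[OF b] lap_density_nonneg[OF b]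
  by (auto simp: has_bochner_integral_iff)

lemma (in prob_space) variance_affine_sum_indep:
  fixes X :: "'i \<Rightarrow> 'a \<Rightarrow> real"
  assumes I: "finite I" and indep: "indep_vars (\<lambda>_. borel) X I"
    and int: "\<And>i. i \<in> I \<Longrightarrow> integrable M (X i)"
    and mean: "\<And>i. i \<in> I \<Longrightarrow> expectation (X i) = 0"
    and int2: "\<And>i. i \<in> I \<Longrightarrow> integrable M (\<lambda>\<omega>. (X i \<omega>)^2)"
    and second: "\<And>i. i \<in> I \<Longrightarrow> expectation (\<lambda>\<omega>. (X i \<omega>)^2) = v i"
  shows "variance (\<lambda>\<omega>. A + (\<Sum>i\<in>I. X i \<omega>) / N) = (\<Sum>i\<in>I. v i) / N^2"
proof -
  define S where "S \<omega> = (\<Sum>i\<in>I. X i \<omega>)" for \<omega>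
  have "expectation S = 0"
    unfolding S_def using int mean by (simp add: Bochner_Integration.integral_sum)
  moreover have "integrable M S"
    unfolding S_def using int by simp
  ultimately have mean_Y: "expectation (\<lambda>\<omega>. A + S \<omega> / N) = A"
    by (simp add: prob_space)
  have products: "integrable M (\<lambda>\<omega>. X i \<omega> * X j \<omega>) \<and>
      expectation (\<lambda>\<omega>. X i \<omega> * X j \<omega>) = (if i = j then v i else 0)" if "i \<in> I" "j \<in> I" for i j
  proof (cases "i = j")
    case True
    with that int2 second show ?thesis
      by (simp add: power2_eq_square)
  next
    case False
    have "indep_vars (\<lambda>_. borel) X {i, j}"
      using that by (intro indep_vars_subset[OF indep]) auto
    then have "integrable M (\<lambda>\<omega>. \<Prod>k\<in>{i,j}. X k \<omega>)"
      and "expectation (\<lambda>\<omega>. \<Prod>k\<in>{i,j}. X k \<omega>) = (\<Prod>k\<in>{i,j}. expectation (X k))"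
      using that int by (auto intro!: indep_vars_integrable indep_vars_lebesgue_integral)
    with False that mean show ?thesis
      by simp
  qed
  have "variance (\<lambda>\<omega>. A + S \<omega> / N) = expectation (\<lambda>\<omega>. (S \<omega>)^2) / N^2"
    unfolding mean_Y by (simp add: power_divide)
  also have "expectation (\<lambda>\<omega>. (S \<omega>)^2) = (\<Sum>i\<in>I. \<Sum>j\<in>I. expectation (\<lambda>\<omega>. X i \<omega> * X j \<omega>))"
    using products by (simp add: S_def power2_eq_square sum_product Bochner_Integration.integral_sum)
  also have "\<dots> = (\<Sum>i\<in>I. v i)"
    using I products by simp
  finally show ?thesis
    by (simp add: S_def)
qed

lemma lap_density_translate_le:
  assumes b: "0 < b"
  shows "lap_density b (y - d) \<le> exp (\<bar>d\<bar> / b) * lap_density b y"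
proof -
  have "- \<bar>y - d\<bar> \<le> \<bar>d\<bar> + - \<bar>y\<bar>"
    using abs_triangle_ineq[of "y - d" d] by simp
  then have "(- \<bar>y - d\<bar>) / b \<le> (\<bar>d\<bar> + - \<bar>y\<bar>) / b"
    using b by (intro divide_right_mono) auto
  then have "- \<bar>y - d\<bar> / b \<le> \<bar>d\<bar> / b + - \<bar>y\<bar> / b"
    by (simp add: diff_divide_distrib)
  then have "exp (- \<bar>y - d\<bar> / b) \<le> exp (\<bar>d\<bar> / b) * exp (- \<bar>y\<bar> / b)"
    by (simp flip: exp_add)
  with b show ?thesis
    unfolding lap_density_def by (simp add: divide_right_mono)
qed

lemma nn_integral_lap_translate_le:
  assumes b: "0 < b" and [measurable]: "H \<in> borel_measurable borel"
  shows "(\<integral>\<^sup>+y. H (y + d) \<partial>density lborel (\<lambda>x. ennreal (lap_density b x)))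
      \<le> ennreal (exp (\<bar>d\<bar> / b)) * (\<integral>\<^sup>+y. H y \<partial>density lborel (\<lambda>x. ennreal (lap_density b x)))"
proof -
  have "(\<integral>\<^sup>+y. H (y + d) \<partial>density lborel (\<lambda>x. ennreal (lap_density b x)))
      = (\<integral>\<^sup>+y. ennreal (lap_density b (y - d)) * H y \<partial>lborel)"
    using nn_integral_real_affine[where c=1 and t="-d" and f="\<lambda>y. ennreal (lap_density b y) * H (y + d)"]
    by (simp add: nn_integral_density)
  also have "\<dots> \<le> (\<integral>\<^sup>+y. ennreal (exp (\<bar>d\<bar> / b)) * (ennreal (lap_density b y) * H y) \<partial>lborel)"
  proof (intro nn_integral_mono)
    fix y :: real
    have "ennreal (lap_density b (y - d)) \<le> ennreal (exp (\<bar>d\<bar> / b)) * ennreal (lap_density b y)"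
      using lap_density_translate_le[OF b] by (simp add: ennreal_leI flip: ennreal_mult')
    then show "ennreal (lap_density b (y - d)) * H y \<le> ennreal (exp (\<bar>d\<bar> / b)) * (ennreal (lap_density b y) * H y)"
      by (simp add: mult.assoc[symmetric] mult_right_mono)
  qed
  also have "\<dots> = ennreal (exp (\<bar>d\<bar> / b)) * (\<integral>\<^sup>+y. H y \<partial>density lborel (\<lambda>x. ennreal (lap_density b x)))"
    by (simp add: nn_integral_cmult nn_integral_density)
  finally show ?thesis .
qed

text \<open>By Fubini, a translation of the \<open>i\<close>-th coordinate changes integrals over the product only
  through the inner integral over the \<open>i\<close>-th factor.\<close>

lemma emeasure_PiM_translate_coordinate_le:
  fixes \<mu> :: "'n::finite \<Rightarrow> real measure" and i :: 'n
  assumes sigma_finite: "\<And>j. sigma_finite_measure (\<mu> j)" and sets_\<mu>: "\<And>j. sets (\<mu> j) = sets borel"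
    and translate: "\<And>H. H \<in> borel_measurable borel \<Longrightarrow> (\<integral>\<^sup>+y. H (y + d) \<partial>\<mu> i) \<le> K * (\<integral>\<^sup>+y. H y \<partial>\<mu> i)"
    and B: "B \<in> sets (PiM UNIV \<mu>)"
  shows "emeasure (PiM UNIV \<mu>) ((\<lambda>z. z(i := z i + d)) -` B) \<le> K * emeasure (PiM UNIV \<mu>) B"
proof -
  interpret product_sigma_finite \<mu>
    using sigma_finite by (simp add: product_sigma_finite_def)
  define I where "I = UNIV - {i}"
  have UNIV_eq: "UNIV = insert i I" and "i \<notin> I" "finite I"
    by (auto simp: I_def)
  interpret PI: finite_product_sigma_finite \<mu> I
    by standard (simp add: \<open>finite I\<close>)
  have space_\<mu>: "space (\<mu> j) = UNIV" for j
    using sets_eq_imp_space_eq[OF sets_\<mu>[of j]] by simp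
  have space: "space (PiM UNIV \<mu>) = UNIV"
    by (simp add: space_PiM space_\<mu>)
  define sh :: "('n \<Rightarrow> real) \<Rightarrow> 'n \<Rightarrow> real" where "sh z = z(i := z i + d)" for z
  have "(\<lambda>z. z i) \<in> measurable (PiM UNIV \<mu>) (\<mu> i)"
    by simp
  then have "(\<lambda>z. z i) \<in> borel_measurable (PiM UNIV \<mu>)"
    using measurable_cong_sets[OF refl sets_\<mu>[of i]] by blast
  then have "(\<lambda>z. z i + d) \<in> borel_measurable (PiM UNIV \<mu>)"
    by measurable
  then have "(\<lambda>z. z i + d) \<in> measurable (PiM UNIV \<mu>) (\<mu> i)"
    using measurable_cong_sets[OF refl sets_\<mu>[of i]] by blast
  then have sh_measurable: "sh \<in> measurable (PiM UNIV \<mu>) (PiM UNIV \<mu>)"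
    unfolding sh_def by (intro measurable_fun_upd[where J=UNIV]) auto
  define H where "H y = (\<integral>\<^sup>+x. indicator B (x(i := y)) \<partial>PiM I \<mu>)" for y
  have "(\<lambda>p. indicator B ((snd p)(i := fst p)) :: ennreal) \<in> borel_measurable (\<mu> i \<Otimes>\<^sub>M PiM I \<mu>)"
    using B by (intro measurable_compose[OF measurable_fun_upd[where J=I]]) (auto simp: UNIV_eq)
  then have "H \<in> borel_measurable (\<mu> i)"
    unfolding H_def using PI.borel_measurable_nn_integral_fst by fastforce
  then have H_measurable: "H \<in> borel_measurable borel"
    using measurable_cong_sets[OF sets_\<mu>[of i] refl] by blast
  have "emeasure (PiM UNIV \<mu>) (sh -` B) = (\<integral>\<^sup>+z. indicator B (sh z) \<partial>PiM UNIV \<mu>)"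
    using measurable_sets[OF sh_measurable B]
    by (simp add: space indicator_vimage[symmetric] nn_integral_indicator)
  also have "\<dots> = (\<integral>\<^sup>+y. H (y + d) \<partial>\<mu> i)"
    unfolding UNIV_eq H_def sh_def
    using measurable_compose[OF sh_measurable borel_measurable_indicator[OF B]]
    by (subst product_nn_integral_insert_rev) (use \<open>i \<notin> I\<close> \<open>finite I\<close> in \<open>auto simp: UNIV_eq[symmetric] sh_def\<close>)
  also have "\<dots> \<le> K * (\<integral>\<^sup>+y. H y \<partial>\<mu> i)"
    by (rule translate[OF H_measurable])
  also have "(\<integral>\<^sup>+y. H y \<partial>\<mu> i) = emeasure (PiM UNIV \<mu>) B"
    unfolding H_def
    using product_nn_integral_insert_rev[of I i "indicator B"] \<open>i \<notin> I\<close> \<open>finite I\<close> B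
    by (simp add: UNIV_eq[symmetric])
  finally show ?thesis
    unfolding sh_def .
qed

section \<open>Differential privacy\<close>

lemma continuous_on_funpow:
  fixes f :: "'a::topological_space \<Rightarrow> 'a"
  assumes f: "continuous_on UNIV f"
  shows "continuous_on UNIV (f ^^ k)"
proof (induction k)
  case (Suc k)
  then show ?case
    using continuous_on_compose2[OF f Suc] by (simp add: comp_def)
qed (simp add: continuous_on_id)

lemma borel_measurable_vec_lambda:
  "(vec_lambda :: ('n::finite \<Rightarrow> real) \<Rightarrow> real^'n) \<in> borel_measurable (PiM UNIV (\<lambda>_. borel))"
proof -
  have "(\<lambda>z. (vec_lambda z :: real^'n) \<bullet> axis j 1) \<in> borel_measurable (PiM UNIV (\<lambda>_::'n. borel))" for j
    by (simp add: cart_eq_inner_axis[symmetric])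
  then show ?thesis
    by (subst borel_measurable_euclidean_space) (auto simp: Basis_vec_def Basis_real_def)
qed

lemma borel_measurable_one_shot_messages:
  fixes \<theta> :: "real^'n"
  shows "(\<lambda>z k. (consensus_step L h ^^ k) (\<theta> + vec_lambda z)) \<in> borel_measurable (PiM UNIV (\<lambda>_::'n. borel))"
proof (rule measurable_coordinatewise_then_product)
  fix k
  have "continuous_on UNIV (consensus_step L h)"
    using linear_consensus_step by (intro linear_continuous_on) (simp add: linear_conv_bounded_linear)
  then have "(consensus_step L h ^^ k) \<in> borel_measurable borel"
    by (intro borel_measurable_continuous_onI continuous_on_funpow)
  moreover have "(\<lambda>z. \<theta> + vec_lambda z) \<in> borel_measurable (PiM UNIV (\<lambda>_::'n. borel))"
    using borel_measurable_vec_lambda by measurable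
  ultimately show "(\<lambda>z. (consensus_step L h ^^ k) (\<theta> + vec_lambda z)) \<in> borel_measurable (PiM UNIV (\<lambda>_. borel))"
    by measurable
qed

lemma (in prob_space) prob_space_distributed_density:
  assumes "distributed M N X f"
  shows "prob_space (density N f)"
  using prob_space_distr[OF distributed_measurable[OF assms]] distributed_distr_eq_density[OF assms]
  by simp

lemma (in prob_space) distr_indep_vars_eq_PiM_density:
  fixes X :: "'i::finite \<Rightarrow> 'a \<Rightarrow> real"
  assumes distributed: "\<And>i. distributed M lborel (X i) (f i)" and indep: "indep_vars (\<lambda>_. borel) X UNIV"
  shows "distr M (PiM UNIV (\<lambda>_. borel)) (\<lambda>\<omega> i. X i \<omega>) = PiM UNIV (\<lambda>i. density lborel (f i))"
proof -
  have X_measurable: "X i \<in> borel_measurable M" for i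
    using distributed_measurable[OF distributed] measurable_cong_sets[OF refl sets_lborel] by blast
  have "distr M (PiM UNIV (\<lambda>_. borel)) (\<lambda>\<omega>. \<lambda>i\<in>UNIV. X i \<omega>) = PiM UNIV (\<lambda>i. distr M borel (X i))"
    using indep_vars_iff_distr_eq_PiM[of UNIV X "\<lambda>_. borel"] X_measurable indep by simp
  moreover have "distr M borel (X i) = density lborel (f i)" for i
  proof -
    have "distr M borel (X i) = distr M lborel (X i)"
      by (rule distr_cong) auto
    then show ?thesis
      using distributed_distr_eq_density[OF distributed] by simp
  qed
  ultimately show ?thesis
    by (simp add: restrict_UNIV)
qed

lemma (in prob_space) measure_one_shot_messages:
  fixes \<eta> :: "'a \<Rightarrow> nat \<Rightarrow> real^'n"
  assumes noise_later: "\<forall>\<omega>\<in>space M. \<forall>k\<ge>1. \<eta> \<omega> k = 0"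
    and noise_measurable: "(\<lambda>\<omega> j. \<eta> \<omega> 0 $ j) \<in> measurable M (PiM UNIV (\<lambda>_. borel))"
    and Obs: "Obs \<in> sets borel"
  shows "measure M {\<omega>\<in>space M. msg_seq L h (mat 1) \<theta> (\<eta> \<omega>) \<in> Obs}
    = measure (distr M (PiM UNIV (\<lambda>_. borel)) (\<lambda>\<omega> j. \<eta> \<omega> 0 $ j))
        ((\<lambda>z k. (consensus_step L h ^^ k) (\<theta> + vec_lambda z)) -` Obs)"
proof -
  let ?F = "\<lambda>z k. (consensus_step L h ^^ k) (\<theta> + vec_lambda z)"
  have "msg_seq L h (mat 1) \<theta> (\<eta> \<omega>) = ?F (\<lambda>j. \<eta> \<omega> 0 $ j)" if "\<omega> \<in> space M" for \<omega>
    using msg_seq_one_shot[of "\<eta> \<omega>"] noise_later that by (simp add: vec_nth_inverse)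
  then have "{\<omega>\<in>space M. msg_seq L h (mat 1) \<theta> (\<eta> \<omega>) \<in> Obs} = (\<lambda>\<omega> j. \<eta> \<omega> 0 $ j) -` (?F -` Obs) \<inter> space M"
    by auto
  moreover have "?F -` Obs \<in> sets (PiM UNIV (\<lambda>_::'n. borel))"
    using measurable_sets[OF borel_measurable_one_shot_messages Obs] by (simp add: space_PiM)
  ultimately show ?thesis
    by (simp add: measure_distr[OF noise_measurable])
qed

text \<open>Moving agent \<open>i\<close>'s initial state by \<open>d\<close> is the same as translating its Laplace noise
  \<open>\<eta>\<^sub>i(0)\<close> by \<open>d\<close>, which changes the density by a factor at most \<open>exp (\<bar>d\<bar> / c i)\<close>.\<close>

lemma (in prob_space) one_shot_laplace_agent_dp:
  fixes \<eta> :: "'a \<Rightarrow> nat \<Rightarrow> real^'n" and c :: "'n \<Rightarrow> real"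
  assumes c_pos: "\<forall>i. 0 < c i"
    and noise_later: "\<forall>\<omega>\<in>space M. \<forall>k\<ge>1. \<eta> \<omega> k = 0"
    and noise_lap: "\<forall>i. distributed M lborel (\<lambda>\<omega>. \<eta> \<omega> 0 $ i) (\<lambda>x. ennreal (lap_density (c i) x))"
    and noise_indep: "indep_vars (\<lambda>_. borel) (\<lambda>i \<omega>. \<eta> \<omega> 0 $ i) UNIV"
  shows "agent_dp M \<eta> (msg_seq L h (mat 1)) \<delta> i (\<delta> / c i)"
  unfolding agent_dp_def
proof (intro allI impI, elim conjE)
  fix \<theta>1 \<theta>2 :: "real^'n" and Obs :: "(nat \<Rightarrow> real^'n) set"
  assume same: "\<forall>j. j \<noteq> i \<longrightarrow> \<theta>1$j = \<theta>2$j" and close: "\<bar>\<theta>1$i - \<theta>2$i\<bar> \<le> \<delta>"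
    and Obs: "Obs \<in> sets borel"
  define \<mu> where "\<mu> j = density lborel (\<lambda>x. ennreal (lap_density (c j) x))" for j
  define F where "F \<theta> = (\<lambda>z k. (consensus_step L h ^^ k) (\<theta> + vec_lambda z)) -` Obs" for \<theta>
  define d where "d = \<theta>1$i - \<theta>2$i"
  have prob_\<mu>: "prob_space (\<mu> j)" for j
    unfolding \<mu>_def using noise_lap by (auto intro: prob_space_distributed_density)
  interpret P\<mu>: prob_space "PiM UNIV \<mu>"
    by (rule prob_space_PiM[OF prob_\<mu>])
  have law: "distr M (PiM UNIV (\<lambda>_. borel)) (\<lambda>\<omega> j. \<eta> \<omega> 0 $ j) = PiM UNIV \<mu>"
    unfolding \<mu>_def using noise_lap noise_indep by (intro distr_indep_vars_eq_PiM_density) auto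
  have "(\<lambda>\<omega>. \<eta> \<omega> 0 $ j) \<in> borel_measurable M" for j
    using distributed_measurable[OF noise_lap[rule_format, of j]] measurable_cong_sets[OF refl sets_lborel]
    by blast
  then have "(\<lambda>\<omega> j. \<eta> \<omega> 0 $ j) \<in> measurable M (PiM UNIV (\<lambda>_. borel))"
    by (intro measurable_PiM_single') (auto simp: space_PiM)
  then have event: "measure M {\<omega>\<in>space M. msg_seq L h (mat 1) \<theta> (\<eta> \<omega>) \<in> Obs} = measure (PiM UNIV \<mu>) (F \<theta>)" for \<theta>
    unfolding F_def law[symmetric] by (rule measure_one_shot_messages[OF noise_later _ Obs])
  have translate: "F \<theta>1 = (\<lambda>z. z(i := z i + d)) -` F \<theta>2"
  proof -
    have "\<theta>1 + vec_lambda z = \<theta>2 + vec_lambda (z(i := z i + d))" for z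
      using same by (auto simp: vec_eq_iff d_def)
    then show ?thesis
      by (simp add: F_def vimage_def)
  qed
  have "F \<theta>2 \<in> sets (PiM UNIV \<mu>)"
    using measurable_sets[OF borel_measurable_one_shot_messages Obs]
    by (simp add: F_def \<mu>_def space_PiM cong: sets_PiM_cong)
  then have "emeasure (PiM UNIV \<mu>) (F \<theta>1) \<le> ennreal (exp (\<bar>d\<bar> / c i)) * emeasure (PiM UNIV \<mu>) (F \<theta>2)"
    unfolding translate using c_pos
    by (intro emeasure_PiM_translate_coordinate_le prob_space_imp_sigma_finite prob_\<mu>)
      (auto simp: \<mu>_def intro!: nn_integral_lap_translate_le)
  then have "measure (PiM UNIV \<mu>) (F \<theta>1) \<le> exp (\<bar>d\<bar> / c i) * measure (PiM UNIV \<mu>) (F \<theta>2)"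
    by (simp add: P\<mu>.emeasure_eq_measure flip: ennreal_mult')
  also have "\<dots> \<le> exp (\<delta> / c i) * measure (PiM UNIV \<mu>) (F \<theta>2)"
    using close c_pos[rule_format, of i] by (intro mult_right_mono) (auto simp: d_def intro!: divide_right_mono)
  finally show "measure M {\<omega>\<in>space M. msg_seq L h (mat 1) \<theta>1 (\<eta> \<omega>) \<in> Obs}
      \<le> exp (\<delta> / c i) * measure M {\<omega>\<in>space M. msg_seq L h (mat 1) \<theta>2 (\<eta> \<omega>) \<in> Obs}"
    unfolding event .
qed

theorem mainTheorem8:
  fixes W :: "real^'n^'n" and h \<delta> :: real and c :: "'n \<Rightarrow> real"
    and M :: "'a measure" and \<eta> :: "'a \<Rightarrow> nat \<Rightarrow> real^'n"
  assumes graph: "weighted_graph W" and conn: "graph_connected W"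
    and h_pos: "0 < h" and h_bound: "h * dmax W < 1"
    and delta_pos: "0 < \<delta>"
    and c_pos: "\<forall>i. 0 < c i"
    and P: "prob_space M"
    and noise_later: "\<forall>\<omega>\<in>space M. \<forall>k\<ge>1. \<eta> \<omega> k = 0"
    and noise_lap: "\<forall>i. distributed M lborel (\<lambda>\<omega>. \<eta> \<omega> 0 $ i) (\<lambda>x. ennreal (lap_density (c i) x))"
    and noise_indep: "prob_space.indep_vars M (\<lambda>_. borel) (\<lambda>i \<omega>. \<eta> \<omega> 0 $ i) UNIV"
  shows "(\<forall>i. agent_dp M \<eta> (msg_seq (laplacian W) h (mat 1)) \<delta> i (\<delta> / c i))
    \<and> (\<forall>\<theta>0::real^'n. \<forall>\<omega>\<in>space M.
          (theta_seq (laplacian W) h (mat 1) \<theta>0 (\<eta> \<omega>)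
            \<longlonglongrightarrow> (Ave \<theta>0 + (\<Sum>i\<in>UNIV. \<eta> \<omega> 0 $ i) / real CARD('n)) *\<^sub>R ones))
    \<and> (\<forall>\<theta>0::real^'n. prob_space.variance M (\<lambda>\<omega>. Ave \<theta>0 + (\<Sum>i\<in>UNIV. \<eta> \<omega> 0 $ i) / real CARD('n))
            = 2 / real CARD('n)^2 * (\<Sum>i\<in>UNIV. (c i)^2)
        \<and> 2 / real CARD('n)^2 * (\<Sum>i\<in>UNIV. (c i)^2)
            = 2 * \<delta>^2 / real CARD('n)^2 * (\<Sum>i\<in>UNIV. 1 / (\<delta> / c i)^2))"
proof -
  interpret prob_space M
    by (rule P)
  note moments = lap_distributed_moments[OF c_pos[rule_format] noise_lap[rule_format]]
  have "variance (\<lambda>\<omega>. Ave \<theta>0 + (\<Sum>i\<in>UNIV. \<eta> \<omega> 0 $ i) / real CARD('n))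
      = (\<Sum>i\<in>UNIV. 2 * (c i)^2) / real CARD('n)^2" for \<theta>0 :: "real^'n"
    using noise_indep moments by (intro variance_affine_sum_indep) auto
  moreover have "(\<Sum>i\<in>UNIV. 1 / (\<delta> / c i)^2) = (\<Sum>i\<in>UNIV. (c i)^2) / \<delta>^2"
    by (simp add: sum_divide_distrib power_divide)
  ultimately show ?thesis
    using one_shot_laplace_agent_dp[OF c_pos noise_later noise_lap noise_indep]
      theta_seq_one_shot_tendsto[OF graph conn h_pos h_bound] noise_later delta_pos
    by (simp add: sum_distrib_left[symmetric])
qed

end
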